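(* Let $G$ be a simple undirected graph on $\{1,\dots,n\}$ ($n\ge2$) with adjacency $g_{ij}$ ($g_{ii}=0$) and $m$ edges. Suppose the potential outcomes are $Y_i(\mathbf z)=\alpha_i+\beta_iz_i+\gamma\sum_jg_{ij}z_j$ for constants $\alpha_i,\beta_i,\gamma$. Under a restricted Bernoulli design with parameter $p\in(0,1)$, the estimator $$\hat\beta_{naive}=\frac{\sum_i Y_i^{obs}Z_i}{\sum_i Z_i}-\frac{\sum_i Y_i^{obs}(1-Z_i)}{\sum_i(1-Z_i)}$$ satisfies $\mathbb E[\hat\beta_{naive}]-\mathrm{DTE}=-\gamma\frac{2m}{n(n-1)}$, where $\mathrm{DTE}=\frac1n\sum_i\beta_i$.
   Context: Restricted Bernoulli design with parameter $p$: $P(\mathbf Z=\mathbf z)=p^{|\mathbf z|}(1-p)^{n-|\mathbf z|}/(1-p^n-(1-p)^n)$ if $0<|\mathbf z|<n$ and $0$ otherwise, where $|\mathbf z|=\sum_iz_i$. $Y_i^{obs}=Y_i(\mathbf Z)$. DTE is the average over units of the outcome when the unit is treated and no neighbor is treated minus the outcome when no unit is treated. *)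

theory Defs
  imports Complex_Main
begin

text \<open>Units are 1..n. A treatment assignment is identified with the set S of treated
units; the 0/1 vector is z = indicator of S, i.e. z_i = (if i \<in> S then 1 else 0).\<close>

definition zvec :: "nat set \<Rightarrow> nat \<Rightarrow> real" where
  "zvec S = (\<lambda>i. if i \<in> S then 1 else 0)"

definition rb_prob :: "nat \<Rightarrow> real \<Rightarrow> nat set \<Rightarrow> real" where
  "rb_prob n p S =
     (if S \<subseteq> {1..n} \<and> 0 < card S \<and> card S < n
      then p ^ card S * (1 - p) ^ (n - card S) / (1 - p ^ n - (1 - p) ^ n)
      else 0)"

definition rb_expect :: "nat \<Rightarrow> real \<Rightarrow> (nat set \<Rightarrow> real) \<Rightarrow> real" where
  "rb_expect n p T = (\<Sum>S\<in>Pow {1..n}. rb_prob n p S * T S)"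

definition Yobs :: "(nat \<Rightarrow> (nat \<Rightarrow> real) \<Rightarrow> real) \<Rightarrow> nat set \<Rightarrow> nat \<Rightarrow> real" where
  "Yobs Y S i = Y i (zvec S)"

definition beta_naive :: "nat \<Rightarrow> (nat \<Rightarrow> (nat \<Rightarrow> real) \<Rightarrow> real) \<Rightarrow> nat set \<Rightarrow> real" where
  "beta_naive n Y S =
     (\<Sum>i=1..n. Yobs Y S i * zvec S i) / (\<Sum>i=1..n. zvec S i)
   - (\<Sum>i=1..n. Yobs Y S i * (1 - zvec S i)) / (\<Sum>i=1..n. (1 - zvec S i))"

definition DTE :: "nat \<Rightarrow> (nat \<Rightarrow> (nat \<Rightarrow> real) \<Rightarrow> real) \<Rightarrow> real" where
  "DTE n Y = (1 / real n) * (\<Sum>i=1..n. Y i (zvec {i}) - Y i (zvec {}))"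

definition simple_graph_on :: "nat \<Rightarrow> (nat \<Rightarrow> nat \<Rightarrow> bool) \<Rightarrow> bool" where
  "simple_graph_on n g \<longleftrightarrow> (\<forall>i j. g i j \<longrightarrow> g j i) \<and> (\<forall>i. \<not> g i i)
      \<and> (\<forall>i j. g i j \<longrightarrow> i \<in> {1..n} \<and> j \<in> {1..n})"

definition num_edges :: "nat \<Rightarrow> (nat \<Rightarrow> nat \<Rightarrow> bool) \<Rightarrow> nat" where
  "num_edges n g = card {(i, j). i \<in> {1..n} \<and> j \<in> {1..n} \<and> i < j \<and> g i j}"

definition adj :: "(nat \<Rightarrow> nat \<Rightarrow> bool) \<Rightarrow> nat \<Rightarrow> nat \<Rightarrow> real" where
  "adj g i j = (if g i j then 1 else 0)"

end

theory Submission
  imports Defs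
begin

(* Conditionally on |Z| = k the restricted Bernoulli design is uniform on the k-subsets of the
   units, and for a uniform k-subset S of n units P(i \<in> S) = k/n and, for i \<noteq> j,
   P(i, j \<in> S) = k(k-1)/(n(n-1)). Write the outcomes as Y_i(z) = \<alpha>_i + \<beta>_i z_i + \<Sum>_j w_ij z_j
   with w_ii = 0, and let A, B, W be the totals of \<alpha>, \<beta> and w. Then the treated mean has
   conditional expectation (A + B)/n + (k-1) W/(n(n-1)) and the control mean A/n + k W/(n(n-1)).
   Their difference B/n - W/(n(n-1)) does not depend on k, so it is also the unconditional
   expectation of the estimator; for w_ij = \<gamma> g_ij we have W = 2 \<gamma> m. *)

(* Stated multiplicatively, so that it also covers k < card A and k > card U. *)
lemma card_subsets_containing:
  assumes "finite U" and "A \<subseteq> U"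
  shows "(card U choose card A) * card {S. S \<subseteq> U \<and> card S = k \<and> A \<subseteq> S}
       = (card U choose k) * (k choose card A)"
proof -
  let ?L = "{S. S \<subseteq> U \<and> card S = k \<and> A \<subseteq> S}"
  have fin_A: "finite A" using assms finite_subset by blast
  consider "k < card A" | "card U < k" | "card A \<le> k" "k \<le> card U" by linarith
  then show ?thesis
  proof cases
    case 1
    have "?L = {}" using 1 assms by (force dest: finite_subset card_mono[rotated])
    then have "card ?L = 0" by (simp only: card.empty)
    with 1 show ?thesis by simp
  next
    case 2
    have "?L = {}" using 2 assms by (force dest: card_mono[rotated])
    then have "card ?L = 0" by (simp only: card.empty)
    with 2 show ?thesis by simp
  next
    case 3
    have "?L = (\<lambda>T. T \<union> A) ` {T. T \<subseteq> U - A \<and> card T = k - card A}"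
    proof (intro set_eqI iffI)
      fix S assume S: "S \<in> ?L"
      then have "S - A \<in> {T. T \<subseteq> U - A \<and> card T = k - card A}" "S = (S - A) \<union> A"
        using fin_A by (auto simp: card_Diff_subset)
      then show "S \<in> (\<lambda>T. T \<union> A) ` {T. T \<subseteq> U - A \<and> card T = k - card A}" by blast
    next
      fix S assume "S \<in> (\<lambda>T. T \<union> A) ` {T. T \<subseteq> U - A \<and> card T = k - card A}"
      then obtain T where "T \<subseteq> U - A" "card T = k - card A" "S = T \<union> A" by auto
      moreover have "finite T" using \<open>T \<subseteq> U - A\<close> assms finite_subset by blast
      moreover have "card (T \<union> A) = card T + card A"
        using \<open>T \<subseteq> U - A\<close> \<open>finite T\<close> fin_A by (intro card_Un_disjoint) auto
      ultimately show "S \<in> ?L" using 3 assms by auto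
    qed
    moreover have "inj_on (\<lambda>T. T \<union> A) {T. T \<subseteq> U - A \<and> card T = k - card A}"
      by (rule inj_onI) blast
    ultimately have "card ?L = (card U - card A) choose (k - card A)"
      using assms by (simp add: card_image n_subsets card_Diff_subset fin_A)
    then show ?thesis using choose_mult[OF 3] by simp
  qed
qed

lemma real_choose_two: "real (m choose 2) = real m * (real m - 1) / 2"
proof -
  have "2 * (m choose 2) = m * (m - 1)"
    using times_binomial_minus1_eq[of 2 m] by simp
  then have "2 * real (m choose 2) = real m * real (m - 1)"
    by (metis of_nat_mult of_nat_numeral)
  then show ?thesis by (cases m) auto
qed

lemma zvec_eq_of_bool: "zvec S i = of_bool ({i} \<subseteq> S)"
  by (simp add: zvec_def)

lemma zvec_mult_zvec: "zvec S i * zvec S j = of_bool ({i, j} \<subseteq> S)"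
  by (simp add: zvec_def)

lemma sum_of_bool_subsets_of_card:
  assumes "finite U"
  shows "(\<Sum>S | S \<subseteq> U \<and> card S = k. of_bool (P S))
       = real (card {S. S \<subseteq> U \<and> card S = k \<and> P S})"
proof -
  have "finite {S. S \<subseteq> U \<and> card S = k}" using assms by simp
  then show ?thesis by (simp add: Collect_conj_eq Int_assoc)
qed

lemma sum_subsets_of_card_zvec:
  assumes "finite U" and "i \<in> U"
  shows "(\<Sum>S | S \<subseteq> U \<and> card S = k. zvec S i) = real k / real (card U) * real (card U choose k)"
proof -
  let ?N = "card {S. S \<subseteq> U \<and> card S = k \<and> {i} \<subseteq> S}"
  have "{i} \<subseteq> U" and "card {i} = 1" using assms(2) by auto
  from card_subsets_containing[OF assms(1) this(1), of k] this(2)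
  have "real (card U) * real ?N = real (card U choose k) * real k"
    by (simp only: choose_one flip: of_nat_mult)
  moreover have "card U > 0" using assms card_gt_0_iff by blast
  ultimately show ?thesis
    unfolding zvec_eq_of_bool sum_of_bool_subsets_of_card[OF assms(1)]
    by (simp add: field_simps)
qed

lemma sum_subsets_of_card_zvec_mult_zvec:
  assumes "finite U" and "i \<in> U" and "j \<in> U" and "i \<noteq> j"
  shows "(\<Sum>S | S \<subseteq> U \<and> card S = k. zvec S i * zvec S j)
       = real k * (real k - 1) / (real (card U) * (real (card U) - 1)) * real (card U choose k)"
proof -
  let ?N = "card {S. S \<subseteq> U \<and> card S = k \<and> {i, j} \<subseteq> S}"
  have "{i, j} \<subseteq> U" and "card {i, j} = 2" using assms(2-4) by auto
  from card_subsets_containing[OF assms(1) this(1), of k] this(2)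
  have "real (card U choose 2) * real ?N = real (card U choose k) * real (k choose 2)"
    by (simp only: flip: of_nat_mult)
  then have "real (card U) * (real (card U) - 1) * real ?N = real (card U choose k) * (real k * (real k - 1))"
    unfolding real_choose_two by (simp add: field_simps)
  moreover have "2 \<le> card U"
    using card_mono[OF assms(1) \<open>{i, j} \<subseteq> U\<close>] \<open>card {i, j} = 2\<close> by simp
  ultimately show ?thesis
    unfolding zvec_mult_zvec sum_of_bool_subsets_of_card[OF assms(1)]
    by (simp add: field_simps)
qed

lemma sum_subsets_of_card_linear:
  assumes "finite U"
  shows "(\<Sum>S | S \<subseteq> U \<and> card S = k. \<Sum>i\<in>U. c i * zvec S i)
       = real k / real (card U) * real (card U choose k) * (\<Sum>i\<in>U. c i)"
proof -
  have "(\<Sum>S | S \<subseteq> U \<and> card S = k. \<Sum>i\<in>U. c i * zvec S i)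
      = (\<Sum>i\<in>U. c i * (\<Sum>S | S \<subseteq> U \<and> card S = k. zvec S i))"
    by (subst sum.swap) (simp add: sum_distrib_left)
  also have "\<dots> = (\<Sum>i\<in>U. c i * (real k / real (card U) * real (card U choose k)))"
    using sum_subsets_of_card_zvec[OF assms] by simp
  also have "\<dots> = real k / real (card U) * real (card U choose k) * (\<Sum>i\<in>U. c i)"
    by (simp only: sum_distrib_right mult.commute)
  finally show ?thesis .
qed

lemma sum_subsets_of_card_quadratic:
  assumes "finite U" and "\<And>i. i \<in> U \<Longrightarrow> w i i = 0"
  shows "(\<Sum>S | S \<subseteq> U \<and> card S = k. \<Sum>i\<in>U. \<Sum>j\<in>U. w i j * (zvec S i * zvec S j))
       = real k * (real k - 1) / (real (card U) * (real (card U) - 1)) * real (card U choose k)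
         * (\<Sum>i\<in>U. \<Sum>j\<in>U. w i j)"
    (is "_ = ?c * _")
proof -
  have pair: "w i j * (\<Sum>S | S \<subseteq> U \<and> card S = k. zvec S i * zvec S j) = w i j * ?c"
    if "i \<in> U" and "j \<in> U" for i j
    using assms sum_subsets_of_card_zvec_mult_zvec[OF assms(1) that] that
    by (cases "i = j") simp_all
  have "(\<Sum>S | S \<subseteq> U \<and> card S = k. \<Sum>i\<in>U. \<Sum>j\<in>U. w i j * (zvec S i * zvec S j))
      = (\<Sum>i\<in>U. \<Sum>j\<in>U. w i j * (\<Sum>S | S \<subseteq> U \<and> card S = k. zvec S i * zvec S j))"
    by (subst sum.swap, subst sum.swap) (simp add: sum_distrib_left)
  also have "\<dots> = (\<Sum>i\<in>U. \<Sum>j\<in>U. w i j * ?c)"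
    using pair by simp
  also have "\<dots> = ?c * (\<Sum>i\<in>U. \<Sum>j\<in>U. w i j)"
    by (simp only: sum_distrib_right mult.commute)
  finally show ?thesis .
qed

lemma beta_naive_eq:
  assumes "S \<subseteq> {1..n}"
  shows "beta_naive n Y S = (\<Sum>i=1..n. Y i (zvec S) * zvec S i) / real (card S)
       - (\<Sum>i=1..n. Y i (zvec S) * (1 - zvec S i)) / (real n - real (card S))"
proof -
  have "{1..n} \<inter> {i. i \<in> S} = S" using assms by blast
  then have "(\<Sum>i=1..n. zvec S i) = real (card S)"
    by (simp add: zvec_def flip: of_bool_def)
  then show ?thesis
    by (simp add: beta_naive_def Yobs_def sum_subtractf)
qed

locale linear_interference =
  fixes n :: nat and \<alpha> \<beta> :: "nat \<Rightarrow> real" and w :: "nat \<Rightarrow> nat \<Rightarrow> real"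
    and Y :: "nat \<Rightarrow> (nat \<Rightarrow> real) \<Rightarrow> real"
  assumes no_self_interference: "w i i = 0"
    and outcome_eq: "Y i z = \<alpha> i + \<beta> i * z i + (\<Sum>j=1..n. w i j * z j)"
begin

lemma sum_subsets_of_card_outcomes:
  "(\<Sum>S | S \<subseteq> {1..n} \<and> card S = k. \<Sum>i=1..n. Y i (zvec S))
       = real (n choose k) * ((\<Sum>i=1..n. \<alpha> i)
           + real k / real n * ((\<Sum>i=1..n. \<beta> i) + (\<Sum>i=1..n. \<Sum>j=1..n. w i j)))"
proof -
  have "(\<Sum>i=1..n. Y i (zvec S))
      = (\<Sum>i=1..n. \<alpha> i) + (\<Sum>i=1..n. (\<beta> i + (\<Sum>j=1..n. w j i)) * zvec S i)" for S
  proof -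
    have "(\<Sum>i=1..n. \<Sum>j=1..n. w i j * zvec S j) = (\<Sum>j=1..n. (\<Sum>i=1..n. w i j) * zvec S j)"
      by (subst sum.swap) (simp add: sum_distrib_right)
    then show ?thesis
      unfolding outcome_eq by (simp add: sum.distrib distrib_right)
  qed
  then have "(\<Sum>S | S \<subseteq> {1..n} \<and> card S = k. \<Sum>i=1..n. Y i (zvec S))
      = real (n choose k) * (\<Sum>i=1..n. \<alpha> i)
        + real k / real n * real (n choose k) * (\<Sum>i=1..n. \<beta> i + (\<Sum>j=1..n. w j i))"
    using sum_subsets_of_card_linear[where U = "{1..n}" and k = k and c = "\<lambda>i. \<beta> i + (\<Sum>j=1..n. w j i)"]
    by (simp add: sum.distrib n_subsets)
  then show ?thesis
    by (simp add: sum.distrib sum.swap[of w] algebra_simps)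
qed

lemma sum_subsets_of_card_treated_outcomes:
  "(\<Sum>S | S \<subseteq> {1..n} \<and> card S = k. \<Sum>i=1..n. Y i (zvec S) * zvec S i)
       = real (n choose k) * (real k / real n * ((\<Sum>i=1..n. \<alpha> i) + (\<Sum>i=1..n. \<beta> i))
           + real k * (real k - 1) / (real n * (real n - 1)) * (\<Sum>i=1..n. \<Sum>j=1..n. w i j))"
proof -
  have "Y i (zvec S) * zvec S i
      = (\<alpha> i + \<beta> i) * zvec S i + (\<Sum>j=1..n. w i j * (zvec S i * zvec S j))" for i S
    unfolding outcome_eq by (simp add: zvec_def sum_distrib_right mult_ac)
  then show ?thesis
    using sum_subsets_of_card_linear[where U = "{1..n}" and k = k and c = "\<lambda>i. \<alpha> i + \<beta> i"]
      sum_subsets_of_card_quadratic[where U = "{1..n}" and w = w and k = k] no_self_interference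
    by (simp add: sum.distrib algebra_simps)
qed

lemma sum_subsets_of_card_treated_mean:
  assumes "0 < k"
  shows "(\<Sum>S | S \<subseteq> {1..n} \<and> card S = k. (\<Sum>i=1..n. Y i (zvec S) * zvec S i) / real k)
       = real (n choose k) * (((\<Sum>i=1..n. \<alpha> i) + (\<Sum>i=1..n. \<beta> i)) / real n
           + (real k - 1) / (real n * (real n - 1)) * (\<Sum>i=1..n. \<Sum>j=1..n. w i j))"
  using sum_subsets_of_card_treated_outcomes[of k] assms
  by (simp add: field_simps flip: sum_divide_distrib)

lemma sum_subsets_of_card_control_mean:
  assumes "0 < k" and "k < n"
  shows "(\<Sum>S | S \<subseteq> {1..n} \<and> card S = k. (\<Sum>i=1..n. Y i (zvec S) * (1 - zvec S i)) / (real n - real k))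
       = real (n choose k) * ((\<Sum>i=1..n. \<alpha> i) / real n
           + real k / (real n * (real n - 1)) * (\<Sum>i=1..n. \<Sum>j=1..n. w i j))"
proof -
  let ?L = "{S. S \<subseteq> {1..n} \<and> card S = k}"
  have "(\<Sum>S\<in>?L. \<Sum>i=1..n. Y i (zvec S) * (1 - zvec S i))
      = (\<Sum>S\<in>?L. \<Sum>i=1..n. Y i (zvec S)) - (\<Sum>S\<in>?L. \<Sum>i=1..n. Y i (zvec S) * zvec S i)"
    by (simp add: right_diff_distrib sum_subtractf)
  also have "\<dots> = (real n - real k) * (real (n choose k) * ((\<Sum>i=1..n. \<alpha> i) / real n
           + real k / (real n * (real n - 1)) * (\<Sum>i=1..n. \<Sum>j=1..n. w i j)))"
  proof -
    \<comment> \<open>Over abstract reals: simp would turn the side conditions on real n into facts about nat.\<close>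
    have "C * (A + k / n * (B + W)) - C * (k / n * (A + B) + k * (k - 1) / (n * (n - 1)) * W)
        = (n - k) * (C * (A / n + k / (n * (n - 1)) * W))"
      if "n \<noteq> 0" and "n - 1 \<noteq> 0" for n k A B C W :: real
      using that by (simp add: field_simps)
    moreover have "real n \<noteq> 0" and "real n - 1 \<noteq> 0" using assms by auto
    ultimately show ?thesis
      unfolding sum_subsets_of_card_outcomes sum_subsets_of_card_treated_outcomes
      by blast
  qed
  finally show ?thesis
    using assms(2) by (simp flip: sum_divide_distrib)
qed

lemma sum_subsets_of_card_beta_naive:
  assumes "0 < k" and "k < n"
  shows "(\<Sum>S | S \<subseteq> {1..n} \<and> card S = k. beta_naive n Y S)
       = real (n choose k) * ((\<Sum>i=1..n. \<beta> i) / real n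
           - (\<Sum>i=1..n. \<Sum>j=1..n. w i j) / (real n * (real n - 1)))"
proof -
  have "(\<Sum>S | S \<subseteq> {1..n} \<and> card S = k. beta_naive n Y S)
      = (\<Sum>S | S \<subseteq> {1..n} \<and> card S = k. (\<Sum>i=1..n. Y i (zvec S) * zvec S i) / real k)
      - (\<Sum>S | S \<subseteq> {1..n} \<and> card S = k. (\<Sum>i=1..n. Y i (zvec S) * (1 - zvec S i)) / (real n - real k))"
    by (simp add: beta_naive_eq sum_subtractf)
  then show ?thesis
    unfolding sum_subsets_of_card_treated_mean[OF assms(1)] sum_subsets_of_card_control_mean[OF assms]
    by (simp add: algebra_simps add_divide_distrib diff_divide_distrib)
qed

lemma DTE_eq:
  "DTE n Y = (1 / real n) * (\<Sum>i=1..n. \<beta> i)"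
proof -
  have "(\<Sum>j=1..n. w i j * zvec {i} j) = 0" for i
    using no_self_interference by (intro sum.neutral) (simp add: zvec_def)
  then show ?thesis
    unfolding DTE_def outcome_eq by (simp add: zvec_def)
qed

end

lemma sum_binomial_interior:
  fixes p :: real
  assumes "n \<noteq> 0"
  shows "(\<Sum>k\<in>{1..<n}. real (n choose k) * p ^ k * (1 - p) ^ (n - k)) = 1 - p ^ n - (1 - p) ^ n"
proof -
  have "{..n} = insert 0 (insert n {1..<n})" using assms by auto
  then have "(\<Sum>k\<le>n. real (n choose k) * p ^ k * (1 - p) ^ (n - k))
      = (1 - p) ^ n + p ^ n + (\<Sum>k\<in>{1..<n}. real (n choose k) * p ^ k * (1 - p) ^ (n - k))"
    using assms by simp
  moreover have "(\<Sum>k\<le>n. real (n choose k) * p ^ k * (1 - p) ^ (n - k)) = 1"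
    using binomial_ring[of p "1 - p" n] by simp
  ultimately show ?thesis by simp
qed

lemma rb_expect_eq_of_layer_sums:
  assumes "2 \<le> n" and "0 < p" and "p < 1"
    and layer: "\<And>k. 0 < k \<Longrightarrow> k < n \<Longrightarrow> (\<Sum>S | S \<subseteq> {1..n} \<and> card S = k. T S) = real (n choose k) * c"
  shows "rb_expect n p T = c"
proof -
  define D where "D = 1 - p ^ n - (1 - p) ^ n"
  have D_eq: "(\<Sum>k\<in>{1..<n}. real (n choose k) * p ^ k * (1 - p) ^ (n - k)) = D"
    unfolding D_def using assms(1) by (intro sum_binomial_interior) simp
  moreover have "(\<Sum>k\<in>{1..<n}. real (n choose k) * p ^ k * (1 - p) ^ (n - k)) > 0"
    using assms(1-3) by (intro sum_pos) auto
  ultimately have "D \<noteq> 0" by simp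
  have layer_prob: "(\<Sum>S | S \<subseteq> {1..n} \<and> card S = k. rb_prob n p S * T S)
      = (if 0 < k \<and> k < n then real (n choose k) * p ^ k * (1 - p) ^ (n - k) * c / D else 0)" for k
  proof -
    have "(\<Sum>S | S \<subseteq> {1..n} \<and> card S = k. rb_prob n p S * T S)
        = (if 0 < k \<and> k < n then p ^ k * (1 - p) ^ (n - k) / D else 0)
          * (\<Sum>S | S \<subseteq> {1..n} \<and> card S = k. T S)"
      by (simp add: sum_distrib_left rb_prob_def D_def)
    then show ?thesis using layer by simp
  qed
  have "rb_expect n p T = (\<Sum>k\<in>{0..n}. \<Sum>S | S \<subseteq> {1..n} \<and> card S = k. rb_prob n p S * T S)"
    unfolding rb_expect_def
    by (subst sum.group[of "Pow {1..n}" "{0..n}" card, symmetric])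
       (auto simp: card_mono[of "{1..n}", simplified] intro!: sum.cong)
  also have "\<dots> = (\<Sum>k\<in>{1..<n}. real (n choose k) * p ^ k * (1 - p) ^ (n - k)) * c / D"
    unfolding layer_prob sum_divide_distrib sum_distrib_right
    by (rule sum.mono_neutral_cong_right) auto
  finally show ?thesis
    using D_eq \<open>D \<noteq> 0\<close> by simp
qed

lemma sum_adj_eq_twice_num_edges:
  assumes "simple_graph_on n g"
  shows "(\<Sum>i=1..n. \<Sum>j=1..n. adj g i j) = 2 * real (num_edges n g)"
proof -
  let ?U = "{1..n}"
  define E where "E = {(i, j). i \<in> ?U \<and> j \<in> ?U \<and> i < j \<and> g i j}"
  have sym: "g i j \<Longrightarrow> g j i" and irrefl: "\<not> g i i" for i j
    using assms unfolding simple_graph_on_def by auto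
  have "finite E" by (rule finite_subset[of _ "?U \<times> ?U"]) (auto simp: E_def)
  have "{(i, j) \<in> ?U \<times> ?U. g i j} = E \<union> prod.swap ` E"
  proof (intro set_eqI iffI)
    fix x assume "x \<in> {(i, j) \<in> ?U \<times> ?U. g i j}"
    moreover obtain i j where "x = (i, j)" by fastforce
    ultimately show "x \<in> E \<union> prod.swap ` E"
      using irrefl sym by (cases i j rule: linorder_cases) (force simp: E_def)+
  qed (auto simp: E_def intro: sym)
  moreover have "card (E \<union> prod.swap ` E) = 2 * card E"
    using \<open>finite E\<close> by (subst card_Un_disjoint) (auto simp: E_def card_image)
  ultimately have "card {(i, j) \<in> ?U \<times> ?U. g i j} = 2 * num_edges n g"
    by (simp add: num_edges_def E_def)
  moreover have "(\<Sum>i=1..n. \<Sum>j=1..n. adj g i j) = real (card {(i, j) \<in> ?U \<times> ?U. g i j})"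
    unfolding adj_def sum.cartesian_product
    by (simp add: case_prod_beta flip: of_bool_def) (auto intro!: arg_cong[where f = card])
  ultimately show ?thesis by simp
qed

theorem proposition13:
  fixes n :: nat and g :: "nat \<Rightarrow> nat \<Rightarrow> bool"
    and \<alpha> \<beta> :: "nat \<Rightarrow> real" and \<gamma> p :: real
    and Y :: "nat \<Rightarrow> (nat \<Rightarrow> real) \<Rightarrow> real"
  assumes "n \<ge> 2"
    and "simple_graph_on n g"
    and "\<And>i z. Y i z = \<alpha> i + \<beta> i * z i + \<gamma> * (\<Sum>j=1..n. adj g i j * z j)"
    and "0 < p" and "p < 1"
  shows "rb_expect n p (beta_naive n Y) - DTE n Y
           = - \<gamma> * (2 * real (num_edges n g)) / (real n * (real n - 1))
         \<and> DTE n Y = (1 / real n) * (\<Sum>i=1..n. \<beta> i)"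
proof -
  define w where "w i j = \<gamma> * adj g i j" for i j
  interpret linear_interference n \<alpha> \<beta> w Y
  proof
    show "w i i = 0" for i
      using assms(2) by (simp add: w_def adj_def simple_graph_on_def)
    show "Y i z = \<alpha> i + \<beta> i * z i + (\<Sum>j=1..n. w i j * z j)" for i z
      unfolding assms(3) w_def by (simp add: sum_distrib_left mult.assoc)
  qed
  have W: "(\<Sum>i=1..n. \<Sum>j=1..n. w i j) = \<gamma> * (2 * real (num_edges n g))"
    using sum_adj_eq_twice_num_edges[OF assms(2)] unfolding w_def by (simp flip: sum_distrib_left)
  have "rb_expect n p (beta_naive n Y)
      = (\<Sum>i=1..n. \<beta> i) / real n - (\<Sum>i=1..n. \<Sum>j=1..n. w i j) / (real n * (real n - 1))"
    using assms(1,4,5) sum_subsets_of_card_beta_naive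
    by (intro rb_expect_eq_of_layer_sums) auto
  then show ?thesis
    unfolding DTE_eq W by simp
qed

end
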